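(* Let $d=2$. The convex envelope of $s\mapsto s_{1n}s_{2n}$ over $Q$ is $$\check b(s)=\max_{\pi\in\Pi}\Bigl\{a_{10}a_{2n}+\sum_{t:\pi_t=1}a_{2(n-p^t_2)}\bigl(s_{1p^t_1}-s_{1p^{t-1}_1}\bigr)+\sum_{t:\pi_t=2}a_{1p^t_1}\bigl(a_{2(n-p^t_2)}-a_{2(n-p^{t-1}_2)}-s_{2(n-p^t_2)}+s_{2(n-p^{t-1}_2)}\bigr)\Bigr\},$$ and the concave envelope of $s\mapsto s_{1n}s_{2n}$ over $Q$ is $$\hat b(s)=\min_{\pi\in\Pi}\Bigl\{a_{10}a_{20}+\sum_{t:\pi_t=1}a_{2p^t_2}\bigl(s_{1p^t_1}-s_{1p^{t-1}_1}\bigr)+\sum_{t:\pi_t=2}a_{1p^t_1}\bigl(s_{2p^t_2}-s_{2p^{t-1}_2}\bigr)\Bigr\}.$$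
   Context: Let $n$ be a positive integer and $a=(a_1,a_2)\in\mathbb{R}^{2\times(n+1)}$ with $a_{i0}<a_{i1}<\dots<a_{in}$, $i=1,2$. Let $v_{ij}\in\mathbb{R}^{n+1}$ have $k$-th component $a_{i,\min\{k,j\}}$ ($k=0,\dots,n$), $Q_i=\operatorname{conv}\{v_{i0},\dots,v_{in}\}$, $Q=Q_1\times Q_2$, points $s=(s_1,s_2)$, $s_i=(s_{i0},\dots,s_{in})$. $\Pi$ is the set of direction vectors $\pi=(\pi_1,\dots,\pi_{2n})\in\{1,2\}^{2n}$ with exactly $n$ entries equal to $1$ and $n$ equal to $2$; for $\pi\in\Pi$ set $p^0=(0,0)$ and $p^t=p^{t-1}+e_{\pi_t}$, $t\in[2n]$, where $e_1,e_2$ are unit vectors in $\mathbb{R}^2$. *)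

theory Defs
  imports "HOL-Analysis.Analysis"
begin

(* Points of R^{n+1} are represented as functions nat => real; only the
   coordinates 0..n are meaningful, the generating vertices are 0 beyond n. *)

definition vtx :: "nat \<Rightarrow> (nat \<Rightarrow> real) \<Rightarrow> nat \<Rightarrow> (nat \<Rightarrow> real)" where
  "vtx n ai j = (\<lambda>k. if k \<le> n then ai (min k j) else 0)"

definition Qi :: "nat \<Rightarrow> (nat \<Rightarrow> real) \<Rightarrow> (nat \<Rightarrow> real) set" where
  "Qi n ai = {x. \<exists>l::nat \<Rightarrow> real. (\<forall>j\<le>n. l j \<ge> 0) \<and> (\<Sum>j\<le>n. l j) = 1 \<and>
                  x = (\<lambda>k. \<Sum>j\<le>n. l j * vtx n ai j k)}"

definition QQ :: "nat \<Rightarrow> (nat \<Rightarrow> real) \<Rightarrow> (nat \<Rightarrow> real) \<Rightarrow> ((nat \<Rightarrow> real) \<times> (nat \<Rightarrow> real)) set" where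
  "QQ n a1 a2 = Qi n a1 \<times> Qi n a2"

definition comb :: "real \<Rightarrow> (nat \<Rightarrow> real) \<times> (nat \<Rightarrow> real) \<Rightarrow> (nat \<Rightarrow> real) \<times> (nat \<Rightarrow> real)
                     \<Rightarrow> (nat \<Rightarrow> real) \<times> (nat \<Rightarrow> real)" where
  "comb t x y = ((\<lambda>k. t * fst x k + (1 - t) * fst y k), (\<lambda>k. t * snd x k + (1 - t) * snd y k))"

type_synonym pt = "(nat \<Rightarrow> real) \<times> (nat \<Rightarrow> real)"

definition convex_fn_on :: "pt set \<Rightarrow> (pt \<Rightarrow> real) \<Rightarrow> bool" where
  "convex_fn_on S g \<longleftrightarrow> (\<forall>x\<in>S. \<forall>y\<in>S. \<forall>t::real. 0 \<le> t \<and> t \<le> 1 \<longrightarrow>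
       g (comb t x y) \<le> t * g x + (1 - t) * g y)"

definition concave_fn_on :: "pt set \<Rightarrow> (pt \<Rightarrow> real) \<Rightarrow> bool" where
  "concave_fn_on S g \<longleftrightarrow> convex_fn_on S (\<lambda>x. - g x)"

definition convex_envelope :: "pt set \<Rightarrow> (pt \<Rightarrow> real) \<Rightarrow> pt \<Rightarrow> real" where
  "convex_envelope S f x = Sup {g x | g. convex_fn_on S g \<and> (\<forall>y\<in>S. g y \<le> f y)}"

definition concave_envelope :: "pt set \<Rightarrow> (pt \<Rightarrow> real) \<Rightarrow> pt \<Rightarrow> real" where
  "concave_envelope S f x = Inf {g x | g. concave_fn_on S g \<and> (\<forall>y\<in>S. f y \<le> g y)}"

(* direction vectors pi = (pi_1..pi_2n) as lists; pi_t = pi ! (t-1) *)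
definition Dirs :: "nat \<Rightarrow> nat list set" where
  "Dirs n = {\<pi>. length \<pi> = 2 * n \<and> set \<pi> \<subseteq> {1, 2} \<and>
                 length (filter (\<lambda>x. x = 1) \<pi>) = n \<and> length (filter (\<lambda>x. x = 2) \<pi>) = n}"

(* p^t = (p1 pi t, p2 pi t), p^0 = (0,0), p^t = p^{t-1} + e_{pi_t} *)
definition p1 :: "nat list \<Rightarrow> nat \<Rightarrow> nat" where
  "p1 \<pi> t = length (filter (\<lambda>x. x = 1) (take t \<pi>))"
definition p2 :: "nat list \<Rightarrow> nat \<Rightarrow> nat" where
  "p2 \<pi> t = length (filter (\<lambda>x. x = 2) (take t \<pi>))"

end

(*
  In the coordinates u = (u_0, ..., u_n) with u_m the total weight of the vertices v_ij, j >= m,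
  the polytope Q_i is an affine image of the order simplex 1 = u_0 >= u_1 >= ... >= u_n >= 0,
  and s_1n s_2n becomes a bilinear form sum_jk kappa_jk u_j w_k whose coefficients are
  nonnegative off the row j = 0 and the column k = 0.  Its concave envelope over a product of
  two order simplices is sum_jk kappa_jk min(u_j, w_k).  This function is the minimum, over the
  lattice paths pi, of affine functions (a path decides for each cell (j, k) whether u_j or w_k is
  charged, and the greedy path always charges the smaller one), so it is a concave majorant.
  Conversely every concave majorant dominates it, by induction on the number of fractional
  coordinates: a point splits, at the level of its smallest positive coordinate, into a 0/1
  point, where both forms agree, and a point with fewer fractional coordinates, and the min form
  is affine along this split.  Written in the coordinates s, the path functions are the facets of
  the concave envelope.  The convex envelope is obtained the same way after reflecting the second
  order simplex (w_m -> 1 - w_(n+1-m)), which turns s_1n s_2n into minus such a bilinear form.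
*)
theory Submission
  imports Defs
begin

definition affine_pt :: "(pt \<Rightarrow> real) \<Rightarrow> bool" where
  "affine_pt L \<longleftrightarrow> (\<forall>t x y. L (comb t x y) = t * L x + (1 - t) * L y)"

lemma affine_pt_const: "affine_pt (\<lambda>s. c)"
  by (simp add: affine_pt_def algebra_simps)

lemma affine_pt_fst: "affine_pt (\<lambda>s. fst s k)"
  and affine_pt_snd: "affine_pt (\<lambda>s. snd s k)"
  by (simp_all add: affine_pt_def comb_def)

lemma affine_pt_add: "affine_pt L \<Longrightarrow> affine_pt M \<Longrightarrow> affine_pt (\<lambda>s. L s + M s)"
  and affine_pt_diff: "affine_pt L \<Longrightarrow> affine_pt M \<Longrightarrow> affine_pt (\<lambda>s. L s - M s)"
  and affine_pt_cmult: "affine_pt L \<Longrightarrow> affine_pt (\<lambda>s. c * L s)"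
  and affine_pt_uminus: "affine_pt L \<Longrightarrow> affine_pt (\<lambda>s. - L s)"
  by (simp_all add: affine_pt_def del: split_paired_All) (simp_all add: algebra_simps)

lemma affine_pt_sum: "(\<And>i. i \<in> I \<Longrightarrow> affine_pt (L i)) \<Longrightarrow> affine_pt (\<lambda>s. \<Sum>i\<in>I. L i s)"
  by (simp add: affine_pt_def sum.distrib sum_distrib_left)

lemmas affine_pt_intros = affine_pt_const affine_pt_fst affine_pt_snd affine_pt_add
  affine_pt_diff affine_pt_cmult affine_pt_uminus affine_pt_sum

lemma affine_pt_imp_concave: "affine_pt L \<Longrightarrow> concave_fn_on S L"
  by (simp add: affine_pt_def convex_fn_on_def concave_fn_on_def del: split_paired_All)

lemma convex_envelope_eq_uminus_concave_envelope:
  "convex_envelope S f x = - concave_envelope S (\<lambda>y. - f y) x"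
proof -
  have "{g x | g. concave_fn_on S g \<and> (\<forall>y\<in>S. - f y \<le> g y)}
      = uminus ` {g x | g. convex_fn_on S g \<and> (\<forall>y\<in>S. g y \<le> f y)}"
  proof (intro equalityI subsetI)
    fix v assume "v \<in> {g x | g. concave_fn_on S g \<and> (\<forall>y\<in>S. - f y \<le> g y)}"
    then obtain g where "v = g x" "concave_fn_on S g" "\<forall>y\<in>S. - f y \<le> g y" by blast
    then show "v \<in> uminus ` {g x | g. convex_fn_on S g \<and> (\<forall>y\<in>S. g y \<le> f y)}"
      unfolding concave_fn_on_def by (intro image_eqI[of _ _ "- g x"]) force+
  next
    fix v assume "v \<in> uminus ` {g x | g. convex_fn_on S g \<and> (\<forall>y\<in>S. g y \<le> f y)}"
    then obtain g where "v = - g x" "convex_fn_on S g" "\<forall>y\<in>S. g y \<le> f y" by blast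
    then show "v \<in> {g x | g. concave_fn_on S g \<and> (\<forall>y\<in>S. - f y \<le> g y)}"
      unfolding concave_fn_on_def by (intro CollectI exI[of _ "\<lambda>y. - g y"]) force
  qed
  then show ?thesis
    unfolding convex_envelope_def concave_envelope_def Inf_real_def by (simp add: image_image)
qed

section \<open>The order simplex\<close>

definition ord_simplex :: "nat \<Rightarrow> (nat \<Rightarrow> real) set" where
  "ord_simplex n = {u. u 0 = 1 \<and> (\<forall>j. 0 \<le> u j \<and> u j \<le> 1) \<and> (\<forall>j. u (Suc j) \<le> u j) \<and> (\<forall>j>n. u j = 0)}"

lemma ord_simplex_antimono:
  assumes "u \<in> ord_simplex n" "j \<le> k"
  shows "u k \<le> u j"
  using assms unfolding ord_simplex_def by (auto intro: lift_Suc_antimono_le)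

definition incr :: "nat \<Rightarrow> (nat \<Rightarrow> real) \<Rightarrow> nat \<Rightarrow> real" where
  "incr n a j = (if j = 0 then a 0 else if j \<le> n then a j - a (j - 1) else 0)"

lemma sum_incr: "i \<le> n \<Longrightarrow> (\<Sum>j\<le>i. incr n a j) = a i"
  by (induction i) (auto simp: incr_def)

lemma incr_nonneg:
  assumes "\<And>j. j < n \<Longrightarrow> a j \<le> a (Suc j)" "1 \<le> j"
  shows "0 \<le> incr n a j"
  using assms(1)[of "j - 1"] assms(2) by (simp add: incr_def)

definition ord_embed :: "nat \<Rightarrow> (nat \<Rightarrow> real) \<Rightarrow> (nat \<Rightarrow> real) \<Rightarrow> nat \<Rightarrow> real" where
  "ord_embed n a u m = (if m \<le> n then \<Sum>j\<le>m. incr n a j * u j else 0)"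

lemma ord_embed_Suc_diff:
  "Suc i \<le> n \<Longrightarrow> ord_embed n a u (Suc i) - ord_embed n a u i = incr n a (Suc i) * u (Suc i)"
  by (simp add: ord_embed_def)

lemma sum_mult_min_eq_sum_incr:
  fixes l :: "nat \<Rightarrow> real"
  assumes "k \<le> n"
  shows "(\<Sum>j\<le>n. l j * a (min k j)) = (\<Sum>m\<le>k. incr n a m * (\<Sum>j=m..n. l j))"
proof -
  have "(\<Sum>j\<le>n. l j * a (min k j)) = (\<Sum>j\<le>n. \<Sum>m\<le>k. if m \<le> j then incr n a m * l j else 0)"
  proof (intro sum.cong refl)
    fix j
    have "(\<Sum>m\<le>k. if m \<le> j then incr n a m else 0) = (\<Sum>m\<in>{m\<in>{..k}. m \<le> j}. incr n a m)"
      by (rule sum.inter_filter[symmetric]) simp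
    also have "{m\<in>{..k}. m \<le> j} = {..min k j}" by auto
    also have "(\<Sum>m\<le>min k j. incr n a m) = a (min k j)" using assms by (simp add: sum_incr)
    finally have a_min: "a (min k j) = (\<Sum>m\<le>k. if m \<le> j then incr n a m else 0)" ..
    show "l j * a (min k j) = (\<Sum>m\<le>k. if m \<le> j then incr n a m * l j else 0)"
      unfolding a_min sum_distrib_left by (intro sum.cong) auto
  qed
  also have "\<dots> = (\<Sum>m\<le>k. \<Sum>j\<le>n. if m \<le> j then incr n a m * l j else 0)"
    by (rule sum.swap)
  also have "\<dots> = (\<Sum>m\<le>k. incr n a m * (\<Sum>j=m..n. l j))"
  proof (intro sum.cong refl)
    fix m
    have "(\<Sum>j\<le>n. if m \<le> j then incr n a m * l j else 0) = (\<Sum>j\<in>{j\<in>{..n}. m \<le> j}. incr n a m * l j)"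
      by (rule sum.inter_filter[symmetric]) simp
    also have "{j\<in>{..n}. m \<le> j} = {m..n}" by auto
    finally show "(\<Sum>j\<le>n. if m \<le> j then incr n a m * l j else 0) = incr n a m * (\<Sum>j=m..n. l j)"
      by (simp add: sum_distrib_left)
  qed
  finally show ?thesis .
qed

lemma convex_comb_vtx_eq_ord_embed:
  assumes "\<And>m. m \<le> n \<Longrightarrow> u m = (\<Sum>j=m..n. l j)"
  shows "(\<lambda>k. \<Sum>j\<le>n. l j * vtx n a j k) = ord_embed n a u"
proof
  fix k
  show "(\<Sum>j\<le>n. l j * vtx n a j k) = ord_embed n a u k"
  proof (cases "k \<le> n")
    case True
    then show ?thesis
      using sum_mult_min_eq_sum_incr[OF True, of l a] assms
      by (simp add: vtx_def ord_embed_def)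
  qed (simp add: vtx_def ord_embed_def)
qed

lemma Qi_eq_image_ord_simplex: "Qi n a = ord_embed n a ` ord_simplex n"
proof (intro equalityI subsetI)
  fix x assume "x \<in> Qi n a"
  then obtain l where l0: "\<forall>j\<le>n. 0 \<le> l j" and l1: "(\<Sum>j\<le>n. l j) = 1"
    and x: "x = (\<lambda>k. \<Sum>j\<le>n. l j * vtx n a j k)" unfolding Qi_def by blast
  define u where "u m = (\<Sum>j=m..n. l j)" for m
  have "u (Suc m) \<le> u m" for m
  proof (cases "m \<le> n")
    case True
    then have "{m..n} = insert m {Suc m..n}" by auto
    then show ?thesis using l0 True by (simp add: u_def)
  qed (simp add: u_def)
  moreover have "u m \<le> 1" for m
    unfolding u_def l1[symmetric] using l0 by (intro sum_mono2) auto
  moreover have "u 0 = 1" using l1 by (simp add: u_def atLeast0AtMost)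
  moreover have "0 \<le> u m" for m using l0 by (auto simp: u_def intro: sum_nonneg)
  ultimately have "u \<in> ord_simplex n" by (simp add: ord_simplex_def u_def)
  moreover have "x = ord_embed n a u"
    unfolding x by (rule convex_comb_vtx_eq_ord_embed) (simp add: u_def)
  ultimately show "x \<in> ord_embed n a ` ord_simplex n" by blast
next
  fix x assume "x \<in> ord_embed n a ` ord_simplex n"
  then obtain u where u: "u \<in> ord_simplex n" and x: "x = ord_embed n a u" by blast
  define l where "l j = u j - u (Suc j)" for j
  have tail: "(\<Sum>j=m..n. l j) = u m" if "m \<le> n" for m
  proof -
    have "(\<Sum>j=m..n. l j) = - (\<Sum>j=m..n. u (Suc j) - u j)"
      by (simp add: l_def sum_negf[symmetric])
    also have "\<dots> = u m - u (Suc n)" using that by (simp add: sum_Suc_diff)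
    finally show ?thesis using u by (simp add: ord_simplex_def)
  qed
  have "\<forall>j\<le>n. 0 \<le> l j" using u by (simp add: l_def ord_simplex_def)
  moreover have "(\<Sum>j\<le>n. l j) = 1" using tail[of 0] u by (simp add: atLeast0AtMost ord_simplex_def)
  moreover have "x = (\<lambda>k. \<Sum>j\<le>n. l j * vtx n a j k)"
    unfolding x by (rule convex_comb_vtx_eq_ord_embed[symmetric]) (simp add: tail)
  ultimately show "x \<in> Qi n a" unfolding Qi_def by blast
qed

section \<open>Concave envelope of a bilinear form on two order simplices\<close>

definition bilin :: "nat \<Rightarrow> (nat \<Rightarrow> nat \<Rightarrow> real) \<Rightarrow> pt \<Rightarrow> real" where
  "bilin n \<kappa> p = (\<Sum>j\<le>n. \<Sum>k\<le>n. \<kappa> j k * (fst p j * snd p k))"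

definition min_form :: "nat \<Rightarrow> (nat \<Rightarrow> nat \<Rightarrow> real) \<Rightarrow> pt \<Rightarrow> real" where
  "min_form n \<kappa> p = (\<Sum>j\<le>n. \<Sum>k\<le>n. \<kappa> j k * min (fst p j) (snd p k))"

lemma bilin_le_min_form:
  assumes p: "p \<in> ord_simplex n \<times> ord_simplex n"
    and \<kappa>: "\<And>j k. 1 \<le> j \<Longrightarrow> 1 \<le> k \<Longrightarrow> 0 \<le> \<kappa> j k"
  shows "bilin n \<kappa> p \<le> min_form n \<kappa> p"
  unfolding bilin_def min_form_def
proof (intro sum_mono)
  fix j k
  have bounds: "0 \<le> fst p j" "fst p j \<le> 1" "0 \<le> snd p k" "snd p k \<le> 1"
    and ones: "fst p 0 = 1" "snd p 0 = 1"
    using p by (auto simp: ord_simplex_def)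
  show "\<kappa> j k * (fst p j * snd p k) \<le> \<kappa> j k * min (fst p j) (snd p k)"
  proof (cases "j = 0 \<or> k = 0")
    case True
    then have "fst p j * snd p k = min (fst p j) (snd p k)"
      using bounds ones by (auto simp: min_def)
    then show ?thesis by simp
  next
    case False
    have "fst p j * snd p k \<le> min (fst p j) (snd p k)"
      using bounds by (simp add: mult_left_le mult_left_le_one_le)
    then show ?thesis using False \<kappa>[of j k] by (simp add: mult_left_mono)
  qed
qed

definition frac_idx :: "nat \<Rightarrow> (nat \<Rightarrow> real) \<Rightarrow> nat set" where
  "frac_idx n u = {j\<in>{..n}. 0 < u j \<and> u j < 1}"

definition frac_count :: "nat \<Rightarrow> pt \<Rightarrow> nat" where
  "frac_count n p = card (frac_idx n (fst p)) + card (frac_idx n (snd p))"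

lemma finite_frac_idx: "finite (frac_idx n u)"
  by (simp add: frac_idx_def)

lemma min_form_eq_bilin_if_integral:
  assumes p: "p \<in> ord_simplex n \<times> ord_simplex n" and "frac_count n p = 0"
  shows "min_form n \<kappa> p = bilin n \<kappa> p"
proof -
  have zero_one: "v j = 0 \<or> v j = 1" if "v \<in> ord_simplex n" "frac_idx n v = {}" "j \<le> n" for v j
  proof -
    have "0 \<le> v j" "v j \<le> 1" using that(1) by (simp_all add: ord_simplex_def)
    moreover have "\<not> (0 < v j \<and> v j < 1)" using that(2,3) by (auto simp: frac_idx_def)
    ultimately show ?thesis by linarith
  qed
  have "frac_idx n (fst p) = {}" "frac_idx n (snd p) = {}"
    using assms(2) finite_frac_idx by (auto simp: frac_count_def)
  then have "min (fst p j) (snd p k) = fst p j * snd p k" if "j \<le> n" "k \<le> n" for j k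
    using zero_one[of "fst p" j] zero_one[of "snd p" k] p that by auto
  then show ?thesis
    unfolding min_form_def bilin_def by (intro sum.cong refl) simp
qed

definition level_cut :: "real \<Rightarrow> real \<Rightarrow> real" where
  "level_cut c v = (if c \<le> v then 1 else 0)"

definition level_residue :: "real \<Rightarrow> real \<Rightarrow> real" where
  "level_residue c v = (v - c * level_cut c v) / (1 - c)"

lemma level_cut_residue_comb: "c \<noteq> 1 \<Longrightarrow> c * level_cut c v + (1 - c) * level_residue c v = v"
  by (simp add: level_residue_def)

lemma min_level_cut_residue:
  assumes "0 < c" "c < 1" "v = 0 \<or> c \<le> v" "v' = 0 \<or> c \<le> v'"
  shows "min v v' = c * min (level_cut c v) (level_cut c v')
    + (1 - c) * min (level_residue c v) (level_residue c v')"
proof (cases "v = 0 \<or> v' = 0")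
  case True
  have "0 \<le> level_residue c v" "0 \<le> level_residue c v'" "level_residue c 0 = 0"
    using assms by (auto simp: level_residue_def level_cut_def)
  then show ?thesis using True assms by (auto simp: level_cut_def min_def)
next
  case False
  then have ge: "c \<le> v" "c \<le> v'" using assms by auto
  have "min (level_residue c v) (level_residue c v') = (min v v' - c) / (1 - c)"
    using ge assms by (auto simp: level_residue_def level_cut_def min_def divide_le_cancel)
  then show ?thesis using ge assms by (simp add: level_cut_def)
qed

lemma ord_simplex_level_cut:
  assumes "u \<in> ord_simplex n" "0 < c" "c \<le> 1"
  shows "(\<lambda>j. level_cut c (u j)) \<in> ord_simplex n"
proof -
  have "level_cut c (u (Suc j)) \<le> level_cut c (u j)" for j
    using assms(1)
    by (auto simp: ord_simplex_def level_cut_def intro: order_trans[of c "u (Suc j)"])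
  then show ?thesis using assms by (auto simp: ord_simplex_def level_cut_def)
qed

lemma ord_simplex_level_residue:
  assumes u: "u \<in> ord_simplex n" and c: "0 < c" "c < 1" and lev: "\<And>j. u j = 0 \<or> c \<le> u j"
  shows "(\<lambda>j. level_residue c (u j)) \<in> ord_simplex n"
proof -
  have "level_residue c (u (Suc j)) \<le> level_residue c (u j)" for j
  proof -
    have "u (Suc j) \<le> u j" using u by (simp add: ord_simplex_def)
    then show ?thesis
      using lev[of j] lev[of "Suc j"] c
      by (auto simp: level_residue_def level_cut_def divide_right_mono)
  qed
  moreover have "0 \<le> level_residue c (u j) \<and> level_residue c (u j) \<le> 1" for j
    using u lev[of j] c by (auto simp: ord_simplex_def level_residue_def level_cut_def)
  ultimately show ?thesis
    using u c by (auto simp: ord_simplex_def level_residue_def level_cut_def)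
qed

lemma card_frac_idx_level_residue:
  assumes c: "0 < c" "c < 1" and lev: "\<And>j. u j = 0 \<or> c \<le> u j"
  shows "card (frac_idx n (\<lambda>j. level_residue c (u j))) \<le> card (frac_idx n u)"
    and "c \<in> u ` frac_idx n u \<Longrightarrow> card (frac_idx n (\<lambda>j. level_residue c (u j))) < card (frac_idx n u)"
proof -
  have "0 < u j \<and> u j < 1 \<and> u j \<noteq> c"
    if "0 < level_residue c (u j)" "level_residue c (u j) < 1" for j
  proof -
    have "c < u j"
      using that(1) lev[of j] c by (auto simp: level_residue_def level_cut_def zero_less_divide_iff)
    moreover have "u j - c < 1 - c"
      using that(2) calculation c by (simp add: level_residue_def level_cut_def)
    ultimately show ?thesis using c by simp
  qed
  then have sub: "frac_idx n (\<lambda>j. level_residue c (u j)) \<subseteq> frac_idx n u - {j. u j = c}"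
    by (auto simp: frac_idx_def)
  then show "card (frac_idx n (\<lambda>j. level_residue c (u j))) \<le> card (frac_idx n u)"
    by (intro card_mono finite_frac_idx) blast
  assume "c \<in> u ` frac_idx n u"
  then have "frac_idx n (\<lambda>j. level_residue c (u j)) \<subset> frac_idx n u" using sub by blast
  then show "card (frac_idx n (\<lambda>j. level_residue c (u j))) < card (frac_idx n u)"
    by (intro psubset_card_mono finite_frac_idx)
qed

lemma ord_simplex_pair_level:
  assumes u: "u \<in> ord_simplex n" and w: "w \<in> ord_simplex n"
    and frac: "frac_idx n u \<union> frac_idx n w \<noteq> {}"
  obtains c where "0 < c" "c < 1" "\<And>j. u j = 0 \<or> c \<le> u j" "\<And>k. w k = 0 \<or> c \<le> w k"
    "c \<in> u ` frac_idx n u \<union> w ` frac_idx n w"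
proof -
  define V where "V = {v \<in> u ` {..n} \<union> w ` {..n}. 0 < v}"
  define c where "c = Min V"
  have "finite V" by (simp add: V_def)
  moreover have "1 \<in> V" using u by (force simp: V_def ord_simplex_def)
  ultimately have cV: "c \<in> V" and c_le: "\<And>v. v \<in> V \<Longrightarrow> c \<le> v"
    unfolding c_def by (auto intro: Min_in)
  obtain z where "z \<in> V" "z < 1" using frac by (force simp: V_def frac_idx_def)
  then have c1: "c < 1" using c_le by force
  have c0: "0 < c" using cV by (simp add: V_def)
  have lev: "v j = 0 \<or> c \<le> v j" if "v \<in> ord_simplex n" "v = u \<or> v = w" for v j
  proof (cases "j \<le> n \<and> 0 < v j")
    case True
    then show ?thesis using that(2) c_le[of "v j"] by (auto simp: V_def)
  next
    case False
    have "0 \<le> v j" "n < j \<Longrightarrow> v j = 0" using that(1) by (simp_all add: ord_simplex_def)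
    then show ?thesis using False by force
  qed
  have "c \<in> u ` frac_idx n u \<union> w ` frac_idx n w"
    using cV c1 by (auto simp: V_def frac_idx_def)
  then show thesis using that c0 c1 lev u w by blast
qed

lemma ord_simplex_pair_split:
  assumes p: "p \<in> ord_simplex n \<times> ord_simplex n" and frac: "frac_count n p \<noteq> 0"
  obtains c x y where "0 < c" "c < 1"
    "x \<in> ord_simplex n \<times> ord_simplex n" "y \<in> ord_simplex n \<times> ord_simplex n"
    "frac_count n x = 0" "frac_count n y < frac_count n p" "p = comb c x y"
    "\<And>\<kappa>. min_form n \<kappa> p = c * min_form n \<kappa> x + (1 - c) * min_form n \<kappa> y"
proof -
  obtain u w where uw: "p = (u, w)" "u \<in> ord_simplex n" "w \<in> ord_simplex n" using p by auto
  have "frac_idx n u \<union> frac_idx n w \<noteq> {}" using frac uw by (auto simp: frac_count_def)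
  then obtain c where c: "0 < c" "c < 1" and lev: "\<And>j. u j = 0 \<or> c \<le> u j" "\<And>k. w k = 0 \<or> c \<le> w k"
    and c_frac: "c \<in> u ` frac_idx n u \<union> w ` frac_idx n w"
    using ord_simplex_pair_level uw by metis
  define x where "x = ((\<lambda>j. level_cut c (u j)), (\<lambda>k. level_cut c (w k)))"
  define y where "y = ((\<lambda>j. level_residue c (u j)), (\<lambda>k. level_residue c (w k)))"
  have "x \<in> ord_simplex n \<times> ord_simplex n" using uw c by (simp add: x_def ord_simplex_level_cut)
  moreover have "y \<in> ord_simplex n \<times> ord_simplex n"
    using uw c lev by (simp add: y_def ord_simplex_level_residue)
  moreover have "frac_count n x = 0" by (simp add: frac_count_def frac_idx_def x_def level_cut_def)
  moreover have "frac_count n y < frac_count n p"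
    using card_frac_idx_level_residue[where u=u and n=n, OF c lev(1)]
      card_frac_idx_level_residue[where u=w and n=n, OF c lev(2)] c_frac
    unfolding frac_count_def y_def uw fst_conv snd_conv by (cases "c \<in> u ` frac_idx n u") auto
  moreover have "p = comb c x y"
    using c by (simp add: uw comb_def x_def y_def level_cut_residue_comb)
  moreover have "min_form n \<kappa> p = c * min_form n \<kappa> x + (1 - c) * min_form n \<kappa> y" for \<kappa>
    unfolding min_form_def uw x_def y_def fst_conv snd_conv min_level_cut_residue[OF c lev]
      sum_distrib_left sum.distrib[symmetric]
    by (intro sum.cong refl) (simp add: algebra_simps)
  ultimately show thesis using that c by blast
qed

lemma min_form_le_concave_majorant:
  assumes concave: "\<And>x y t. x \<in> ord_simplex n \<times> ord_simplex n \<Longrightarrow> y \<in> ord_simplex n \<times> ord_simplex n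
      \<Longrightarrow> 0 \<le> t \<Longrightarrow> t \<le> 1 \<Longrightarrow> t * h x + (1 - t) * h y \<le> h (comb t x y)"
    and major: "\<And>q. q \<in> ord_simplex n \<times> ord_simplex n \<Longrightarrow> bilin n \<kappa> q \<le> h q"
    and p: "p \<in> ord_simplex n \<times> ord_simplex n"
  shows "min_form n \<kappa> p \<le> h p"
  using p
proof (induction "frac_count n p" arbitrary: p rule: less_induct)
  case less
  show ?case
  proof (cases "frac_count n p = 0")
    case True
    then show ?thesis using min_form_eq_bilin_if_integral major less.prems by simp
  next
    case False
    then obtain c x y where c: "0 < c" "c < 1"
      and x: "x \<in> ord_simplex n \<times> ord_simplex n" "frac_count n x = 0"
      and y: "y \<in> ord_simplex n \<times> ord_simplex n" "frac_count n y < frac_count n p"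
      and p_eq: "p = comb c x y"
      and split: "min_form n \<kappa> p = c * min_form n \<kappa> x + (1 - c) * min_form n \<kappa> y"
      using ord_simplex_pair_split[OF less.prems] by metis
    have "min_form n \<kappa> p \<le> c * h x + (1 - c) * h y"
      unfolding split using c major[OF x(1)] less.hyps[OF y(2) y(1)]
        min_form_eq_bilin_if_integral[OF x] by (intro add_mono mult_left_mono) auto
    also have "\<dots> \<le> h p" using concave[OF x(1) y(1)] c p_eq by simp
    finally show ?thesis .
  qed
qed

section \<open>Lattice paths\<close>

abbreviation count1 :: "nat list \<Rightarrow> nat" where
  "count1 xs \<equiv> length (filter (\<lambda>x. x = 1) xs)"

abbreviation count2 :: "nat list \<Rightarrow> nat" where
  "count2 xs \<equiv> length (filter (\<lambda>x. x = 2) xs)"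

lemma Dirs_iff: "\<pi> \<in> Dirs n \<longleftrightarrow> set \<pi> \<subseteq> {1, 2} \<and> count1 \<pi> = n \<and> count2 \<pi> = n"
proof -
  have "length xs = count1 xs + count2 xs" if "set xs \<subseteq> {1, 2}" for xs :: "nat list"
    using that by (induction xs) auto
  then show ?thesis unfolding Dirs_def by auto
qed

lemma finite_Dirs: "finite (Dirs n)"
proof (rule finite_subset)
  show "Dirs n \<subseteq> {xs. set xs \<subseteq> {1, 2} \<and> length xs = 2 * n}" by (auto simp: Dirs_def)
  show "finite {xs. set xs \<subseteq> {1::nat, 2} \<and> length xs = 2 * n}"
    by (rule finite_lists_length_eq) simp
qed

text \<open>A direction vector is a monotone lattice path from \<open>(i, h)\<close>; a step \<open>1\<close> moves the first
  coordinate, a step \<open>2\<close> the second.\<close>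

fun path_sum :: "(nat \<Rightarrow> nat \<Rightarrow> nat \<Rightarrow> real) \<Rightarrow> nat list \<Rightarrow> nat \<Rightarrow> nat \<Rightarrow> real" where
  "path_sum \<psi> [] i h = 0"
| "path_sum \<psi> (x # xs) i h =
     \<psi> x i h + (if x = 1 then path_sum \<psi> xs (Suc i) h else path_sum \<psi> xs i (Suc h))"

definition step_gain ::
    "(nat \<Rightarrow> nat \<Rightarrow> real) \<Rightarrow> (nat \<Rightarrow> real) \<Rightarrow> (nat \<Rightarrow> real) \<Rightarrow> nat \<Rightarrow> nat \<Rightarrow> nat \<Rightarrow> real" where
  "step_gain \<kappa> u w x i h =
     (if x = 1 then (\<Sum>k\<le>h. \<kappa> (Suc i) k * u (Suc i)) else (\<Sum>j\<le>i. \<kappa> j (Suc h) * w (Suc h)))"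

definition corner_min ::
    "(nat \<Rightarrow> nat \<Rightarrow> real) \<Rightarrow> (nat \<Rightarrow> real) \<Rightarrow> (nat \<Rightarrow> real) \<Rightarrow> nat \<Rightarrow> nat \<Rightarrow> real" where
  "corner_min \<kappa> u w i h = (\<Sum>j\<le>i. \<Sum>k\<le>h. \<kappa> j k * min (u j) (w k))"

lemma corner_min_Suc:
  "corner_min \<kappa> u w (Suc i) h = corner_min \<kappa> u w i h + (\<Sum>k\<le>h. \<kappa> (Suc i) k * min (u (Suc i)) (w k))"
  "corner_min \<kappa> u w i (Suc h) = corner_min \<kappa> u w i h + (\<Sum>j\<le>i. \<kappa> j (Suc h) * min (u j) (w (Suc h)))"
  by (simp_all add: corner_min_def sum.distrib)

lemma corner_min_step_le:
  assumes \<kappa>: "\<And>j k. 1 \<le> j \<Longrightarrow> 1 \<le> k \<Longrightarrow> 0 \<le> \<kappa> j k"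
    and u: "u \<in> ord_simplex n" and w: "w \<in> ord_simplex n"
  shows "corner_min \<kappa> u w (Suc i) h - corner_min \<kappa> u w i h \<le> step_gain \<kappa> u w 1 i h"
    and "corner_min \<kappa> u w i (Suc h) - corner_min \<kappa> u w i h \<le> step_gain \<kappa> u w 2 i h"
proof -
  have ones: "u 0 = 1" "w 0 = 1" and le1: "u j \<le> 1" "w j \<le> 1" for j
    using u w by (auto simp: ord_simplex_def)
  have "\<kappa> (Suc i) k * min (u (Suc i)) (w k) \<le> \<kappa> (Suc i) k * u (Suc i)" for k
    using \<kappa>[of "Suc i" k] ones le1 by (cases "k = 0") (auto intro: mult_left_mono)
  then show "corner_min \<kappa> u w (Suc i) h - corner_min \<kappa> u w i h \<le> step_gain \<kappa> u w 1 i h"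
    by (simp add: corner_min_Suc step_gain_def sum_mono)
  have "\<kappa> j (Suc h) * min (u j) (w (Suc h)) \<le> \<kappa> j (Suc h) * w (Suc h)" for j
    using \<kappa>[of j "Suc h"] ones le1 by (cases "j = 0") (auto intro: mult_left_mono)
  then show "corner_min \<kappa> u w i (Suc h) - corner_min \<kappa> u w i h \<le> step_gain \<kappa> u w 2 i h"
    by (simp add: corner_min_Suc step_gain_def sum_mono)
qed

lemma corner_min_le_path_sum:
  assumes "set xs \<subseteq> {1, 2}" and \<kappa>: "\<And>j k. 1 \<le> j \<Longrightarrow> 1 \<le> k \<Longrightarrow> 0 \<le> \<kappa> j k"
    and u: "u \<in> ord_simplex n" and w: "w \<in> ord_simplex n"
  shows "corner_min \<kappa> u w (i + count1 xs) (h + count2 xs) - corner_min \<kappa> u w i h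
    \<le> path_sum (step_gain \<kappa> u w) xs i h"
  using assms(1)
proof (induction xs arbitrary: i h)
  case (Cons x xs)
  then have "x = 1 \<or> x = 2" and xs: "set xs \<subseteq> {1, 2}" by auto
  then show ?case
    using Cons.IH[OF xs, of "Suc i" h] Cons.IH[OF xs, of i "Suc h"]
      corner_min_step_le[where \<kappa>=\<kappa> and i=i and h=h, OF \<kappa> u w]
    by auto
qed simp

text \<open>Along the greedy path every cell \<open>(j, k)\<close> is entered by a step whose gain carries the
  smaller of \<open>u j\<close> and \<open>w k\<close>; \<open>corner_split\<close> is the invariant that makes this true.\<close>

definition corner_split :: "nat \<Rightarrow> (nat \<Rightarrow> real) \<Rightarrow> (nat \<Rightarrow> real) \<Rightarrow> nat \<Rightarrow> nat \<Rightarrow> bool" where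
  "corner_split n u w i h \<longleftrightarrow>
     (\<forall>j k. i < j \<longrightarrow> j \<le> n \<longrightarrow> k \<le> h \<longrightarrow> u j \<le> w k) \<and>
     (\<forall>j k. j \<le> i \<longrightarrow> h < k \<longrightarrow> k \<le> n \<longrightarrow> w k \<le> u j)"

lemma corner_split_0_0: "u \<in> ord_simplex n \<Longrightarrow> w \<in> ord_simplex n \<Longrightarrow> corner_split n u w 0 0"
  by (simp add: corner_split_def ord_simplex_def)

lemma corner_split_Suc1:
  assumes split: "corner_split n u w i h" and w: "w \<in> ord_simplex n"
    and step: "h = n \<or> w (Suc h) < u (Suc i)"
  shows "corner_split n u w (Suc i) h"
  unfolding corner_split_def
proof (intro conjI allI impI)
  fix j k assume "Suc i < j" "j \<le> n" "k \<le> h"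
  then show "u j \<le> w k" using split by (simp add: corner_split_def)
next
  fix j k assume jk: "j \<le> Suc i" "h < k" "k \<le> n"
  show "w k \<le> u j"
  proof (cases "j = Suc i")
    case True
    have "w k \<le> w (Suc h)" using ord_simplex_antimono[OF w] jk by simp
    then show ?thesis using step jk True by auto
  next
    case False
    then show ?thesis using split jk by (simp add: corner_split_def)
  qed
qed

lemma corner_split_Suc2:
  assumes split: "corner_split n u w i h" and u: "u \<in> ord_simplex n"
    and step: "i = n \<or> u (Suc i) \<le> w (Suc h)"
  shows "corner_split n u w i (Suc h)"
  unfolding corner_split_def
proof (intro conjI allI impI)
  fix j k assume jk: "i < j" "j \<le> n" "k \<le> Suc h"
  show "u j \<le> w k"
  proof (cases "k = Suc h")
    case True
    have "u j \<le> u (Suc i)" using ord_simplex_antimono[OF u] jk by simp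
    then show ?thesis using step jk True by auto
  next
    case False
    then show ?thesis using split jk by (simp add: corner_split_def)
  qed
next
  fix j k assume "j \<le> i" "Suc h < k" "k \<le> n"
  then show "w k \<le> u j" using split by (simp add: corner_split_def)
qed

lemma step_gain_eq_corner_min_diff:
  assumes split: "corner_split n u w i h"
  shows "i < n \<Longrightarrow> step_gain \<kappa> u w 1 i h = corner_min \<kappa> u w (Suc i) h - corner_min \<kappa> u w i h"
    and "h < n \<Longrightarrow> step_gain \<kappa> u w 2 i h = corner_min \<kappa> u w i (Suc h) - corner_min \<kappa> u w i h"
proof -
  assume "i < n"
  then have "u (Suc i) \<le> w k" if "k \<le> h" for k
    using split that Suc_leI[OF \<open>i < n\<close>] lessI[of i] unfolding corner_split_def by blast
  then have "min (u (Suc i)) (w k) = u (Suc i)" if "k \<le> h" for k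
    using that by (simp add: min_absorb1)
  then show "step_gain \<kappa> u w 1 i h = corner_min \<kappa> u w (Suc i) h - corner_min \<kappa> u w i h"
    by (simp add: corner_min_Suc step_gain_def)
next
  assume "h < n"
  then have "w (Suc h) \<le> u j" if "j \<le> i" for j
    using split that Suc_leI[OF \<open>h < n\<close>] lessI[of h] unfolding corner_split_def by blast
  then have "min (u j) (w (Suc h)) = w (Suc h)" if "j \<le> i" for j
    using that by (simp add: min_absorb2)
  then show "step_gain \<kappa> u w 2 i h = corner_min \<kappa> u w i (Suc h) - corner_min \<kappa> u w i h"
    by (simp add: corner_min_Suc step_gain_def)
qed

lemma greedy_path_exists:
  assumes u: "u \<in> ord_simplex n" and w: "w \<in> ord_simplex n"
  shows "corner_split n u w i h \<Longrightarrow> i \<le> n \<Longrightarrow> h \<le> n \<Longrightarrow>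
    \<exists>xs. set xs \<subseteq> {1, 2} \<and> count1 xs = n - i \<and> count2 xs = n - h \<and>
      path_sum (step_gain \<kappa> u w) xs i h = corner_min \<kappa> u w n n - corner_min \<kappa> u w i h"
proof (induction "(n - i) + (n - h)" arbitrary: i h rule: less_induct)
  case less
  consider "i = n" "h = n" | (one) "i < n" "h = n \<or> w (Suc h) < u (Suc i)"
    | (two) "h < n" "i = n \<or> u (Suc i) \<le> w (Suc h)"
    using less.prems by force
  then show ?case
  proof cases
    case 1
    then show ?thesis by (intro exI[of _ "[]"]) simp
  next
    case one
    have "\<exists>xs. set xs \<subseteq> {1, 2} \<and> count1 xs = n - Suc i \<and> count2 xs = n - h \<and>
      path_sum (step_gain \<kappa> u w) xs (Suc i) h = corner_min \<kappa> u w n n - corner_min \<kappa> u w (Suc i) h"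
      using one less.prems by (intro less.hyps corner_split_Suc1[OF less.prems(1) w]) auto
    then obtain xs where "set xs \<subseteq> {1, 2}" "count1 xs = n - Suc i" "count2 xs = n - h"
      "path_sum (step_gain \<kappa> u w) xs (Suc i) h = corner_min \<kappa> u w n n - corner_min \<kappa> u w (Suc i) h"
      by blast
    then show ?thesis
      using one step_gain_eq_corner_min_diff(1)[OF less.prems(1)] by (intro exI[of _ "1 # xs"]) auto
  next
    case two
    have "\<exists>xs. set xs \<subseteq> {1, 2} \<and> count1 xs = n - i \<and> count2 xs = n - Suc h \<and>
      path_sum (step_gain \<kappa> u w) xs i (Suc h) = corner_min \<kappa> u w n n - corner_min \<kappa> u w i (Suc h)"
      using two less.prems by (intro less.hyps corner_split_Suc2[OF less.prems(1) u]) auto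
    then obtain xs where "set xs \<subseteq> {1, 2}" "count1 xs = n - i" "count2 xs = n - Suc h"
      "path_sum (step_gain \<kappa> u w) xs i (Suc h) = corner_min \<kappa> u w n n - corner_min \<kappa> u w i (Suc h)"
      by blast
    then show ?thesis
      using two step_gain_eq_corner_min_diff(2)[OF less.prems(1)] by (intro exI[of _ "2 # xs"]) auto
  qed
qed

lemma corner_min_0_0: "u \<in> ord_simplex n \<Longrightarrow> w \<in> ord_simplex n \<Longrightarrow> corner_min \<kappa> u w 0 0 = \<kappa> 0 0"
  by (simp add: corner_min_def ord_simplex_def)

lemma corner_min_n_n: "corner_min \<kappa> u w n n = min_form n \<kappa> (u, w)"
  by (simp add: corner_min_def min_form_def)

lemma min_form_le_path_sum:
  assumes "\<pi> \<in> Dirs n" "(u, w) \<in> ord_simplex n \<times> ord_simplex n"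
    and "\<And>j k. 1 \<le> j \<Longrightarrow> 1 \<le> k \<Longrightarrow> 0 \<le> \<kappa> j k"
  shows "min_form n \<kappa> (u, w) \<le> \<kappa> 0 0 + path_sum (step_gain \<kappa> u w) \<pi> 0 0"
  using corner_min_le_path_sum[of \<pi> \<kappa> u n w 0 0] corner_min_0_0[of u n w \<kappa>] corner_min_n_n assms
  by (simp add: Dirs_iff)

lemma min_form_eq_greedy_path_sum:
  assumes "(u, w) \<in> ord_simplex n \<times> ord_simplex n"
  shows "\<exists>\<pi>\<in>Dirs n. \<kappa> 0 0 + path_sum (step_gain \<kappa> u w) \<pi> 0 0 = min_form n \<kappa> (u, w)"
  using greedy_path_exists[of u n w 0 0 \<kappa>] corner_split_0_0[of u n w] corner_min_0_0[of u n w \<kappa>]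
    corner_min_n_n assms
  by (force simp: Dirs_iff)

lemma p_step:
  assumes "1 \<le> t" "t \<le> length \<pi>"
  shows "p1 \<pi> t = p1 \<pi> (t - 1) + (if \<pi> ! (t - 1) = 1 then 1 else 0)"
    and "p2 \<pi> t = p2 \<pi> (t - 1) + (if \<pi> ! (t - 1) = 2 then 1 else 0)"
proof -
  have "take t \<pi> = take (t - 1) \<pi> @ [\<pi> ! (t - 1)]"
    using assms take_Suc_conv_app_nth[of "t - 1" \<pi>] by simp
  then show "p1 \<pi> t = p1 \<pi> (t - 1) + (if \<pi> ! (t - 1) = 1 then 1 else 0)"
    and "p2 \<pi> t = p2 \<pi> (t - 1) + (if \<pi> ! (t - 1) = 2 then 1 else 0)"
    by (simp_all add: p1_def p2_def)
qed

lemma p_le_count: "p1 \<pi> t \<le> count1 \<pi>" "p2 \<pi> t \<le> count2 \<pi>"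
proof -
  have "count1 \<pi> = p1 \<pi> t + count1 (drop t \<pi>)" "count2 \<pi> = p2 \<pi> t + count2 (drop t \<pi>)"
    unfolding p1_def p2_def by (metis append_take_drop_id filter_append length_append)+
  then show "p1 \<pi> t \<le> count1 \<pi>" "p2 \<pi> t \<le> count2 \<pi>" by simp_all
qed

lemma Dirs_step:
  assumes \<pi>: "\<pi> \<in> Dirs n" and t: "t \<in> {1..2 * n}"
  shows "\<pi> ! (t - 1) = 1 \<Longrightarrow>
      p1 \<pi> t = Suc (p1 \<pi> (t - 1)) \<and> p2 \<pi> t = p2 \<pi> (t - 1) \<and> p1 \<pi> t \<le> n \<and> p2 \<pi> t \<le> n"
    and "\<pi> ! (t - 1) = 2 \<Longrightarrow>
      p1 \<pi> t = p1 \<pi> (t - 1) \<and> p2 \<pi> t = Suc (p2 \<pi> (t - 1)) \<and> p1 \<pi> t \<le> n \<and> p2 \<pi> t \<le> n"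
  using p_step[of t \<pi>] p_le_count[of \<pi> t] \<pi> t by (auto simp: Dirs_def)

lemma sum_nth_eq_path_sum:
  "set xs \<subseteq> {1, 2} \<Longrightarrow> (\<Sum>t<length xs. \<psi> (xs ! t) (i + p1 xs t) (h + p2 xs t)) = path_sum \<psi> xs i h"
proof (induction xs arbitrary: i h)
  case (Cons x xs)
  have "p1 (x # xs) (Suc t) = (if x = 1 then 1 else 0) + p1 xs t"
    and "p2 (x # xs) (Suc t) = (if x = 2 then 1 else 0) + p2 xs t" for t
    by (simp_all add: p1_def p2_def)
  moreover have "x = 1 \<or> x = 2" "set xs \<subseteq> {1, 2}" using Cons.prems by auto
  ultimately show ?case
    using Cons.IH[of "Suc i" h] Cons.IH[of i "Suc h"]
    by (auto simp: sum.lessThan_Suc_shift p1_def p2_def simp del: sum.lessThan_Suc)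
qed simp

lemma path_sum_eq_sum_steps:
  assumes "set \<pi> \<subseteq> {1, 2}"
  shows "(\<Sum>t\<in>{t\<in>{1..length \<pi>}. \<pi> ! (t - 1) = 1}. \<psi> 1 (p1 \<pi> (t - 1)) (p2 \<pi> (t - 1)))
       + (\<Sum>t\<in>{t\<in>{1..length \<pi>}. \<pi> ! (t - 1) = 2}. \<psi> 2 (p1 \<pi> (t - 1)) (p2 \<pi> (t - 1)))
       = path_sum \<psi> \<pi> 0 0"
proof -
  have "\<pi> ! (t - 1) \<in> {1, 2}" if "t \<in> {1..length \<pi>}" for t
  proof -
    have "\<pi> ! (t - 1) \<in> set \<pi>" using that by (intro nth_mem) auto
    then show ?thesis using assms by blast
  qed
  then have "(\<Sum>t=1..length \<pi>. (if \<pi> ! (t - 1) = 1 then \<psi> 1 (p1 \<pi> (t - 1)) (p2 \<pi> (t - 1)) else 0)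
        + (if \<pi> ! (t - 1) = 2 then \<psi> 2 (p1 \<pi> (t - 1)) (p2 \<pi> (t - 1)) else 0))
      = (\<Sum>t=1..length \<pi>. \<psi> (\<pi> ! (t - 1)) (p1 \<pi> (t - 1)) (p2 \<pi> (t - 1)))"
    by (intro sum.cong) auto
  then have "(\<Sum>t\<in>{t\<in>{1..length \<pi>}. \<pi> ! (t - 1) = 1}. \<psi> 1 (p1 \<pi> (t - 1)) (p2 \<pi> (t - 1)))
       + (\<Sum>t\<in>{t\<in>{1..length \<pi>}. \<pi> ! (t - 1) = 2}. \<psi> 2 (p1 \<pi> (t - 1)) (p2 \<pi> (t - 1)))
       = (\<Sum>t=1..length \<pi>. \<psi> (\<pi> ! (t - 1)) (p1 \<pi> (t - 1)) (p2 \<pi> (t - 1)))"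
    by (simp only: sum.inter_filter finite_atLeastAtMost sum.distrib)
  also have "\<dots> = path_sum \<psi> \<pi> 0 0"
    using sum_nth_eq_path_sum[OF assms, of \<psi> 0 0] by (simp add: sum.atLeast1_atMost_eq)
  finally show ?thesis .
qed

section \<open>Coordinates on the product polytope and the facets\<close>

definition affine_seq_map :: "((nat \<Rightarrow> real) \<Rightarrow> nat \<Rightarrow> real) \<Rightarrow> bool" where
  "affine_seq_map F \<longleftrightarrow>
     (\<forall>t u v. F (\<lambda>k. t * u k + (1 - t) * v k) = (\<lambda>k. t * F u k + (1 - t) * F v k))"

lemma affine_seq_map_comp: "affine_seq_map F \<Longrightarrow> affine_seq_map G \<Longrightarrow> affine_seq_map (F \<circ> G)"
  by (simp add: affine_seq_map_def)

lemma map_prod_comb: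
  assumes "affine_seq_map F" "affine_seq_map G"
  shows "map_prod F G (comb t x y) = comb t (map_prod F G x) (map_prod F G y)"
  using assms by (simp add: affine_seq_map_def comb_def map_prod_def split_beta)

lemma affine_seq_map_ord_embed: "affine_seq_map (ord_embed n a)"
  unfolding affine_seq_map_def ord_embed_def
  by (simp add: fun_eq_iff distrib_left sum.distrib sum_distrib_left mult_ac)

definition ord_reflect :: "nat \<Rightarrow> (nat \<Rightarrow> real) \<Rightarrow> nat \<Rightarrow> real" where
  "ord_reflect n w m = (if m = 0 then 1 else if m \<le> n then 1 - w (n + 1 - m) else 0)"

lemma affine_seq_map_ord_reflect: "affine_seq_map (ord_reflect n)"
  by (auto simp: affine_seq_map_def ord_reflect_def algebra_simps)

lemma ord_reflect_ord_simplex: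
  assumes w: "w \<in> ord_simplex n"
  shows "ord_reflect n w \<in> ord_simplex n"
proof -
  have "ord_reflect n w (Suc j) \<le> ord_reflect n w j" for j
    using ord_simplex_antimono[OF w, of "n - j" "n + 1 - j"] w
    by (auto simp: ord_reflect_def ord_simplex_def Suc_diff_le)
  then show ?thesis using w by (auto simp: ord_reflect_def ord_simplex_def)
qed

lemma ord_reflect_ord_reflect: "w \<in> ord_simplex n \<Longrightarrow> ord_reflect n (ord_reflect n w) = w"
  by (auto simp: fun_eq_iff ord_reflect_def ord_simplex_def)

lemma ord_reflect_image: "ord_reflect n ` ord_simplex n = ord_simplex n"
  using ord_reflect_ord_simplex ord_reflect_ord_reflect
  by (metis image_subsetI subsetI image_eqI subset_antisym)

definition rev_incr :: "nat \<Rightarrow> (nat \<Rightarrow> real) \<Rightarrow> nat \<Rightarrow> real" where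
  "rev_incr n a r = (if r = 0 then - a n else if r \<le> n then a (n + 1 - r) - a (n - r) else 0)"

lemma sum_rev_incr: "h \<le> n \<Longrightarrow> (\<Sum>r\<le>h. rev_incr n a r) = - a (n - h)"
proof (induction h)
  case (Suc h)
  then have "n + 1 - Suc h = n - h" "n - h = Suc (n - Suc h)" by auto
  then show ?case using Suc by (simp add: rev_incr_def)
qed (simp add: rev_incr_def)

lemma rev_incr_nonneg:
  assumes "\<And>j. j < n \<Longrightarrow> a j \<le> a (Suc j)" "1 \<le> r"
  shows "0 \<le> rev_incr n a r"
  using assms(1)[of "n - r"] assms(2) by (simp add: rev_incr_def Suc_diff_le)

lemma ord_embed_ord_reflect_last:
  assumes "w 0 = 1"
  shows "ord_embed n a (ord_reflect n w) n = - (\<Sum>r\<le>n. rev_incr n a r * w r)"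
proof -
  have split0: "{..n} = insert 0 {1..n}" by auto
  have "ord_embed n a (ord_reflect n w) n
      = (\<Sum>j\<le>n. incr n a j) - (\<Sum>j=1..n. incr n a j * w (n + 1 - j))"
    by (simp add: ord_embed_def ord_reflect_def split0 algebra_simps sum_subtractf)
  also have "(\<Sum>j=1..n. incr n a j * w (n + 1 - j)) = (\<Sum>r=1..n. rev_incr n a r * w r)"
    by (subst sum.atLeastAtMost_rev) (auto simp: incr_def rev_incr_def Suc_diff_le intro!: sum.cong)
  finally show ?thesis
    using assms sum_incr[of n n a] by (simp add: split0 rev_incr_def)
qed

definition lower_facet :: "nat \<Rightarrow> (nat \<Rightarrow> real) \<Rightarrow> (nat \<Rightarrow> real) \<Rightarrow> nat list \<Rightarrow> pt \<Rightarrow> real" where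
  "lower_facet n a1 a2 \<pi> s = a1 0 * a2 n
     + (\<Sum>t\<in>{t\<in>{1..2*n}. \<pi> ! (t - 1) = 1}.
          a2 (n - p2 \<pi> t) * (fst s (p1 \<pi> t) - fst s (p1 \<pi> (t - 1))))
     + (\<Sum>t\<in>{t\<in>{1..2*n}. \<pi> ! (t - 1) = 2}.
          a1 (p1 \<pi> t) * (a2 (n - p2 \<pi> t) - a2 (n - p2 \<pi> (t - 1))
                            - snd s (n - p2 \<pi> t) + snd s (n - p2 \<pi> (t - 1))))"

definition upper_facet :: "nat \<Rightarrow> (nat \<Rightarrow> real) \<Rightarrow> (nat \<Rightarrow> real) \<Rightarrow> nat list \<Rightarrow> pt \<Rightarrow> real" where
  "upper_facet n a1 a2 \<pi> s = a1 0 * a2 0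
     + (\<Sum>t\<in>{t\<in>{1..2*n}. \<pi> ! (t - 1) = 1}.
          a2 (p2 \<pi> t) * (fst s (p1 \<pi> t) - fst s (p1 \<pi> (t - 1))))
     + (\<Sum>t\<in>{t\<in>{1..2*n}. \<pi> ! (t - 1) = 2}.
          a1 (p1 \<pi> t) * (snd s (p2 \<pi> t) - snd s (p2 \<pi> (t - 1))))"

lemma affine_lower_facet: "affine_pt (lower_facet n a1 a2 \<pi>)"
  and affine_upper_facet: "affine_pt (upper_facet n a1 a2 \<pi>)"
  unfolding lower_facet_def upper_facet_def by (intro affine_pt_intros)+

lemma step_gain_prod:
  "step_gain (\<lambda>j k. \<alpha> j * \<beta> k) u w x i h =
     (if x = 1 then (\<Sum>k\<le>h. \<beta> k) * \<alpha> (Suc i) * u (Suc i) else (\<Sum>j\<le>i. \<alpha> j) * \<beta> (Suc h) * w (Suc h))"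
  by (simp add: step_gain_def sum_distrib_left sum_distrib_right mult_ac)

lemma upper_facet_ord_embed:
  assumes \<pi>: "\<pi> \<in> Dirs n"
  shows "upper_facet n a1 a2 \<pi> (map_prod (ord_embed n a1) (ord_embed n a2) (u, w))
    = a1 0 * a2 0 + path_sum (step_gain (\<lambda>j k. incr n a1 j * incr n a2 k) u w) \<pi> 0 0"
proof -
  let ?\<psi> = "step_gain (\<lambda>j k. incr n a1 j * incr n a2 k) u w"
  have "(\<Sum>t\<in>{t\<in>{1..2*n}. \<pi> ! (t - 1) = 1}.
          a2 (p2 \<pi> t) * (ord_embed n a1 u (p1 \<pi> t) - ord_embed n a1 u (p1 \<pi> (t - 1))))
      = (\<Sum>t\<in>{t\<in>{1..2*n}. \<pi> ! (t - 1) = 1}. ?\<psi> 1 (p1 \<pi> (t - 1)) (p2 \<pi> (t - 1)))"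
  proof (intro sum.cong refl)
    fix t assume "t \<in> {t\<in>{1..2*n}. \<pi> ! (t - 1) = 1}"
    then show "a2 (p2 \<pi> t) * (ord_embed n a1 u (p1 \<pi> t) - ord_embed n a1 u (p1 \<pi> (t - 1)))
      = ?\<psi> 1 (p1 \<pi> (t - 1)) (p2 \<pi> (t - 1))"
      using Dirs_step(1)[OF \<pi>, of t] by (simp add: ord_embed_Suc_diff step_gain_prod sum_incr)
  qed
  moreover have "(\<Sum>t\<in>{t\<in>{1..2*n}. \<pi> ! (t - 1) = 2}.
          a1 (p1 \<pi> t) * (ord_embed n a2 w (p2 \<pi> t) - ord_embed n a2 w (p2 \<pi> (t - 1))))
      = (\<Sum>t\<in>{t\<in>{1..2*n}. \<pi> ! (t - 1) = 2}. ?\<psi> 2 (p1 \<pi> (t - 1)) (p2 \<pi> (t - 1)))"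
  proof (intro sum.cong refl)
    fix t assume "t \<in> {t\<in>{1..2*n}. \<pi> ! (t - 1) = 2}"
    then show "a1 (p1 \<pi> t) * (ord_embed n a2 w (p2 \<pi> t) - ord_embed n a2 w (p2 \<pi> (t - 1)))
      = ?\<psi> 2 (p1 \<pi> (t - 1)) (p2 \<pi> (t - 1))"
      using Dirs_step(2)[OF \<pi>, of t] by (simp add: ord_embed_Suc_diff step_gain_prod sum_incr)
  qed
  ultimately show ?thesis
    using path_sum_eq_sum_steps[of \<pi> ?\<psi>] \<pi> by (simp add: upper_facet_def Dirs_def)
qed

lemma lower_facet_ord_embed_reflect:
  assumes \<pi>: "\<pi> \<in> Dirs n"
  shows "lower_facet n a1 a2 \<pi> (map_prod (ord_embed n a1) (ord_embed n a2 \<circ> ord_reflect n) (u, w))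
    = a1 0 * a2 n - path_sum (step_gain (\<lambda>j k. incr n a1 j * rev_incr n a2 k) u w) \<pi> 0 0"
proof -
  let ?\<psi> = "step_gain (\<lambda>j k. incr n a1 j * rev_incr n a2 k) u w"
  let ?v = "ord_embed n a2 (ord_reflect n w)"
  have reflect_step: "a2 (n - Suc h) - a2 (n - h) - ?v (n - Suc h) + ?v (n - h)
      = - (rev_incr n a2 (Suc h) * w (Suc h))" if "Suc h \<le> n" for h
  proof -
    have "n - h = Suc (n - Suc h)" "n + 1 - (n - h) = Suc h" using that by auto
    then show ?thesis
      using that ord_embed_Suc_diff[of "n - Suc h" n a2 "ord_reflect n w"]
      by (simp add: incr_def ord_reflect_def rev_incr_def algebra_simps)
  qed
  have "(\<Sum>t\<in>{t\<in>{1..2*n}. \<pi> ! (t - 1) = 1}.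
          a2 (n - p2 \<pi> t) * (ord_embed n a1 u (p1 \<pi> t) - ord_embed n a1 u (p1 \<pi> (t - 1))))
      = (\<Sum>t\<in>{t\<in>{1..2*n}. \<pi> ! (t - 1) = 1}. - ?\<psi> 1 (p1 \<pi> (t - 1)) (p2 \<pi> (t - 1)))"
  proof (intro sum.cong refl)
    fix t assume "t \<in> {t\<in>{1..2*n}. \<pi> ! (t - 1) = 1}"
    then show "a2 (n - p2 \<pi> t) * (ord_embed n a1 u (p1 \<pi> t) - ord_embed n a1 u (p1 \<pi> (t - 1)))
      = - ?\<psi> 1 (p1 \<pi> (t - 1)) (p2 \<pi> (t - 1))"
      using Dirs_step(1)[OF \<pi>, of t] by (simp add: ord_embed_Suc_diff step_gain_prod sum_rev_incr)
  qed
  moreover have "(\<Sum>t\<in>{t\<in>{1..2*n}. \<pi> ! (t - 1) = 2}.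
          a1 (p1 \<pi> t) * (a2 (n - p2 \<pi> t) - a2 (n - p2 \<pi> (t - 1))
                            - ?v (n - p2 \<pi> t) + ?v (n - p2 \<pi> (t - 1))))
      = (\<Sum>t\<in>{t\<in>{1..2*n}. \<pi> ! (t - 1) = 2}. - ?\<psi> 2 (p1 \<pi> (t - 1)) (p2 \<pi> (t - 1)))"
  proof (intro sum.cong refl)
    fix t assume "t \<in> {t\<in>{1..2*n}. \<pi> ! (t - 1) = 2}"
    then show "a1 (p1 \<pi> t) * (a2 (n - p2 \<pi> t) - a2 (n - p2 \<pi> (t - 1))
                                 - ?v (n - p2 \<pi> t) + ?v (n - p2 \<pi> (t - 1)))
      = - ?\<psi> 2 (p1 \<pi> (t - 1)) (p2 \<pi> (t - 1))"
      using Dirs_step(2)[OF \<pi>, of t] reflect_step[of "p2 \<pi> (t - 1)"]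
      by (simp add: step_gain_prod sum_incr)
  qed
  ultimately show ?thesis
    using path_sum_eq_sum_steps[of \<pi> ?\<psi>] \<pi>
    by (simp add: lower_facet_def Dirs_def sum_negf)
qed

lemma ord_embed_last_prod:
  "fst (map_prod (ord_embed n a1) (ord_embed n a2) p) n
      * snd (map_prod (ord_embed n a1) (ord_embed n a2) p) n
    = bilin n (\<lambda>j k. incr n a1 j * incr n a2 k) p"
  by (simp add: ord_embed_def bilin_def map_prod_def split_beta sum_product mult_ac)

lemma ord_embed_reflect_last_prod:
  assumes "snd p 0 = 1"
  shows "fst (map_prod (ord_embed n a1) (ord_embed n a2 \<circ> ord_reflect n) p) n
      * snd (map_prod (ord_embed n a1) (ord_embed n a2 \<circ> ord_reflect n) p) n
    = - bilin n (\<lambda>j k. incr n a1 j * rev_incr n a2 k) p"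
proof -
  have "ord_embed n a2 (ord_reflect n (snd p)) n = - (\<Sum>k\<le>n. rev_incr n a2 k * snd p k)"
    by (rule ord_embed_ord_reflect_last[where w="snd p", OF assms])
  then show ?thesis
    by (simp add: map_prod_def split_beta bilin_def ord_embed_def sum_product sum_negf mult_ac)
qed

lemma min_form_le_concave_majorant_image:
  assumes Q: "Q = \<phi> ` (ord_simplex n \<times> ord_simplex n)"
    and \<phi>_comb: "\<And>t x y. \<phi> (comb t x y) = comb t (\<phi> x) (\<phi> y)"
    and f: "\<And>q. q \<in> ord_simplex n \<times> ord_simplex n \<Longrightarrow> f (\<phi> q) = bilin n \<kappa> q"
    and g: "concave_fn_on Q g" "\<forall>y\<in>Q. f y \<le> g y"
    and p: "p \<in> ord_simplex n \<times> ord_simplex n"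
  shows "min_form n \<kappa> p \<le> g (\<phi> p)"
proof (rule min_form_le_concave_majorant[OF _ _ p])
  fix x y and t :: real
  assume xy: "x \<in> ord_simplex n \<times> ord_simplex n" "y \<in> ord_simplex n \<times> ord_simplex n"
    and t: "0 \<le> t" "t \<le> 1"
  have "\<phi> x \<in> Q" "\<phi> y \<in> Q" using Q xy by auto
  then have "- g (comb t (\<phi> x) (\<phi> y)) \<le> t * - g (\<phi> x) + (1 - t) * - g (\<phi> y)"
    using g(1) t unfolding concave_fn_on_def convex_fn_on_def by blast
  then show "t * g (\<phi> x) + (1 - t) * g (\<phi> y) \<le> g (\<phi> (comb t x y))"
    by (simp add: \<phi>_comb)
next
  fix q assume q: "q \<in> ord_simplex n \<times> ord_simplex n"
  then have "\<phi> q \<in> Q" using Q by auto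
  then show "bilin n \<kappa> q \<le> g (\<phi> q)" using g(2) f[OF q] by auto
qed

lemma concave_envelope_eq_Min_facets:
  fixes \<phi> :: "pt \<Rightarrow> pt" and L :: "'i \<Rightarrow> pt \<Rightarrow> real"
  assumes Q: "Q = \<phi> ` (ord_simplex n \<times> ord_simplex n)"
    and \<phi>_comb: "\<And>t x y. \<phi> (comb t x y) = comb t (\<phi> x) (\<phi> y)"
    and f: "\<And>q. q \<in> ord_simplex n \<times> ord_simplex n \<Longrightarrow> f (\<phi> q) = bilin n \<kappa> q"
    and \<kappa>: "\<And>j k. 1 \<le> j \<Longrightarrow> 1 \<le> k \<Longrightarrow> 0 \<le> \<kappa> j k"
    and D: "finite D" "\<And>i. i \<in> D \<Longrightarrow> affine_pt (L i)"
    and L_ge: "\<And>i q. i \<in> D \<Longrightarrow> q \<in> ord_simplex n \<times> ord_simplex n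
      \<Longrightarrow> min_form n \<kappa> q \<le> L i (\<phi> q)"
    and L_eq: "\<And>q. q \<in> ord_simplex n \<times> ord_simplex n \<Longrightarrow> \<exists>i\<in>D. L i (\<phi> q) = min_form n \<kappa> q"
    and s: "s \<in> Q"
  shows "concave_envelope Q f s = Min ((\<lambda>i. L i s) ` D)"
proof -
  obtain p where p: "p \<in> ord_simplex n \<times> ord_simplex n" and s_eq: "s = \<phi> p" using s Q by blast
  obtain i0 where i0: "i0 \<in> D" "Min ((\<lambda>i. L i s) ` D) = L i0 s"
    using Min_in[of "(\<lambda>i. L i s) ` D"] D(1) L_eq[OF p] by fastforce
  let ?A = "{g s | g. concave_fn_on Q g \<and> (\<forall>y\<in>Q. f y \<le> g y)}"
  have "f y \<le> L i0 y" if "y \<in> Q" for y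
  proof -
    obtain q where q: "q \<in> ord_simplex n \<times> ord_simplex n" "y = \<phi> q" using \<open>y \<in> Q\<close> Q by blast
    then show ?thesis
      using f bilin_le_min_form[where \<kappa>=\<kappa>, OF q(1) \<kappa>] L_ge[OF i0(1) q(1)] by simp
  qed
  then have "L i0 s \<in> ?A" using affine_pt_imp_concave[OF D(2)[OF i0(1)]] by blast
  moreover have "L i0 s \<le> g s" if "concave_fn_on Q g" "\<forall>y\<in>Q. f y \<le> g y" for g
  proof -
    obtain i where "i \<in> D" "L i s = min_form n \<kappa> p" using L_eq[OF p] s_eq by blast
    moreover have "L i0 s \<le> L i s"
      using Min_le[OF finite_imageI[OF D(1)] imageI[OF \<open>i \<in> D\<close>], of "\<lambda>i. L i s"] i0(2) by simp
    ultimately show ?thesis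
      using min_form_le_concave_majorant_image[OF Q \<phi>_comb f that p] s_eq by simp
  qed
  ultimately have "Inf ?A = L i0 s" by (intro cInf_eq_minimum) blast+
  then show ?thesis unfolding concave_envelope_def i0(2) .
qed

lemma QQ_eq_image_ord_embed:
  "QQ n a1 a2 = map_prod (ord_embed n a1) (ord_embed n a2) ` (ord_simplex n \<times> ord_simplex n)"
  unfolding QQ_def Qi_eq_image_ord_simplex by (simp add: map_prod_surj_on)

lemma QQ_eq_image_ord_embed_reflect:
  "QQ n a1 a2 =
     map_prod (ord_embed n a1) (ord_embed n a2 \<circ> ord_reflect n) ` (ord_simplex n \<times> ord_simplex n)"
proof -
  have "(ord_embed n a2 \<circ> ord_reflect n) ` ord_simplex n = ord_embed n a2 ` ord_simplex n"
    by (simp only: image_comp[symmetric] ord_reflect_image)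
  then show ?thesis
    using map_prod_surj_on[OF refl] unfolding QQ_def Qi_eq_image_ord_simplex by metis
qed

lemma concave_envelope_QQ:
  assumes mono: "\<And>j. j < n \<Longrightarrow> a1 j \<le> a1 (Suc j)" "\<And>j. j < n \<Longrightarrow> a2 j \<le> a2 (Suc j)"
    and s: "s \<in> QQ n a1 a2"
  shows "concave_envelope (QQ n a1 a2) (\<lambda>s. fst s n * snd s n) s
    = Min ((\<lambda>\<pi>. upper_facet n a1 a2 \<pi> s) ` Dirs n)"
proof -
  let ?\<kappa> = "\<lambda>j k. incr n a1 j * incr n a2 k"
  let ?\<phi> = "map_prod (ord_embed n a1) (ord_embed n a2)"
  have facet: "upper_facet n a1 a2 \<pi> (?\<phi> (u, w)) = ?\<kappa> 0 0 + path_sum (step_gain ?\<kappa> u w) \<pi> 0 0"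
    if "\<pi> \<in> Dirs n" for \<pi> u w
    using upper_facet_ord_embed[OF that] by (simp add: incr_def)
  show ?thesis
  proof (rule concave_envelope_eq_Min_facets[OF QQ_eq_image_ord_embed, where \<kappa>="?\<kappa>"])
    show "?\<phi> (comb t x y) = comb t (?\<phi> x) (?\<phi> y)" for t x y
      by (intro map_prod_comb affine_seq_map_ord_embed)
    show "fst (?\<phi> q) n * snd (?\<phi> q) n = bilin n ?\<kappa> q" for q
      by (rule ord_embed_last_prod)
    show "0 \<le> ?\<kappa> j k" if "1 \<le> j" "1 \<le> k" for j k
      using incr_nonneg[where a=a1, OF mono(1) that(1)] incr_nonneg[where a=a2, OF mono(2) that(2)]
      by simp
    then show "min_form n ?\<kappa> q \<le> upper_facet n a1 a2 \<pi> (?\<phi> q)"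
      if "\<pi> \<in> Dirs n" "q \<in> ord_simplex n \<times> ord_simplex n" for \<pi> q
      using min_form_le_path_sum[of \<pi> n "fst q" "snd q" ?\<kappa>] facet[OF that(1)] that by auto
    show "\<exists>\<pi>\<in>Dirs n. upper_facet n a1 a2 \<pi> (?\<phi> q) = min_form n ?\<kappa> q"
      if "q \<in> ord_simplex n \<times> ord_simplex n" for q
      using min_form_eq_greedy_path_sum[of "fst q" "snd q" n ?\<kappa>] facet that by auto
  qed (use finite_Dirs affine_upper_facet s in auto)
qed

lemma convex_envelope_QQ:
  assumes mono: "\<And>j. j < n \<Longrightarrow> a1 j \<le> a1 (Suc j)" "\<And>j. j < n \<Longrightarrow> a2 j \<le> a2 (Suc j)"
    and s: "s \<in> QQ n a1 a2"
  shows "convex_envelope (QQ n a1 a2) (\<lambda>s. fst s n * snd s n) s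
    = Max ((\<lambda>\<pi>. lower_facet n a1 a2 \<pi> s) ` Dirs n)"
proof -
  let ?\<kappa> = "\<lambda>j k. incr n a1 j * rev_incr n a2 k"
  let ?\<phi> = "map_prod (ord_embed n a1) (ord_embed n a2 \<circ> ord_reflect n)"
  have facet: "- lower_facet n a1 a2 \<pi> (?\<phi> (u, w)) = ?\<kappa> 0 0 + path_sum (step_gain ?\<kappa> u w) \<pi> 0 0"
    if "\<pi> \<in> Dirs n" for \<pi> u w
    using lower_facet_ord_embed_reflect[OF that] by (simp add: incr_def rev_incr_def)
  have "concave_envelope (QQ n a1 a2) (\<lambda>s. - (fst s n * snd s n)) s
    = Min ((\<lambda>\<pi>. - lower_facet n a1 a2 \<pi> s) ` Dirs n)"
  proof (rule concave_envelope_eq_Min_facets[OF QQ_eq_image_ord_embed_reflect, where \<kappa>="?\<kappa>"])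
    show "?\<phi> (comb t x y) = comb t (?\<phi> x) (?\<phi> y)" for t x y
      by (intro map_prod_comb affine_seq_map_comp affine_seq_map_ord_embed
          affine_seq_map_ord_reflect)
    show "- (fst (?\<phi> q) n * snd (?\<phi> q) n) = bilin n ?\<kappa> q"
      if "q \<in> ord_simplex n \<times> ord_simplex n" for q
      using ord_embed_reflect_last_prod[of q n a1 a2] that by (auto simp: ord_simplex_def)
    show "0 \<le> ?\<kappa> j k" if "1 \<le> j" "1 \<le> k" for j k
      using incr_nonneg[where a=a1, OF mono(1) that(1)]
        rev_incr_nonneg[where a=a2, OF mono(2) that(2)] by simp
    then show "min_form n ?\<kappa> q \<le> - lower_facet n a1 a2 \<pi> (?\<phi> q)"
      if "\<pi> \<in> Dirs n" "q \<in> ord_simplex n \<times> ord_simplex n" for \<pi> q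
      using min_form_le_path_sum[of \<pi> n "fst q" "snd q" ?\<kappa>] facet[OF that(1)] that by auto
    show "\<exists>\<pi>\<in>Dirs n. - lower_facet n a1 a2 \<pi> (?\<phi> q) = min_form n ?\<kappa> q"
      if "q \<in> ord_simplex n \<times> ord_simplex n" for q
      using min_form_eq_greedy_path_sum[of "fst q" "snd q" n ?\<kappa>] facet that by auto
  qed (use finite_Dirs affine_lower_facet affine_pt_uminus s in auto)
  moreover have "- Min ((\<lambda>\<pi>. - lower_facet n a1 a2 \<pi> s) ` Dirs n)
      = Max (uminus ` (\<lambda>\<pi>. - lower_facet n a1 a2 \<pi> s) ` Dirs n)"
  proof (rule minus_Min_eq_Max)
    have "replicate n 1 @ replicate n 2 \<in> Dirs n" by (auto simp: Dirs_def)
    then show "(\<lambda>\<pi>. - lower_facet n a1 a2 \<pi> s) ` Dirs n \<noteq> {}" by blast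
  qed (simp add: finite_Dirs)
  ultimately show ?thesis
    by (simp add: convex_envelope_eq_uminus_concave_envelope image_image)
qed

theorem corollary4p4:
  fixes n :: nat and a1 a2 :: "nat \<Rightarrow> real"
  assumes "n > 0"
    and "\<And>j. j < n \<Longrightarrow> a1 j < a1 (Suc j)"
    and "\<And>j. j < n \<Longrightarrow> a2 j < a2 (Suc j)"
  defines "f \<equiv> (\<lambda>s::pt. fst s n * snd s n)"
  shows "\<forall>s \<in> QQ n a1 a2.
     convex_envelope (QQ n a1 a2) f s =
       Max ((\<lambda>\<pi>. a1 0 * a2 n
          + (\<Sum>t\<in>{t\<in>{1..2*n}. \<pi> ! (t - 1) = 1}.
               a2 (n - p2 \<pi> t) * (fst s (p1 \<pi> t) - fst s (p1 \<pi> (t - 1))))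
          + (\<Sum>t\<in>{t\<in>{1..2*n}. \<pi> ! (t - 1) = 2}.
               a1 (p1 \<pi> t) * (a2 (n - p2 \<pi> t) - a2 (n - p2 \<pi> (t - 1))
                                 - snd s (n - p2 \<pi> t) + snd s (n - p2 \<pi> (t - 1)))))
          ` Dirs n)
     \<and> concave_envelope (QQ n a1 a2) f s =
       Min ((\<lambda>\<pi>. a1 0 * a2 0
          + (\<Sum>t\<in>{t\<in>{1..2*n}. \<pi> ! (t - 1) = 1}.
               a2 (p2 \<pi> t) * (fst s (p1 \<pi> t) - fst s (p1 \<pi> (t - 1))))
          + (\<Sum>t\<in>{t\<in>{1..2*n}. \<pi> ! (t - 1) = 2}.
               a1 (p1 \<pi> t) * (snd s (p2 \<pi> t) - snd s (p2 \<pi> (t - 1)))))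
          ` Dirs n)"
proof -
  have mono: "\<And>j. j < n \<Longrightarrow> a1 j \<le> a1 (Suc j)" "\<And>j. j < n \<Longrightarrow> a2 j \<le> a2 (Suc j)"
    using assms(2,3) by (simp_all add: less_imp_le)
  show ?thesis
    using convex_envelope_QQ[where ?a1.0=a1 and ?a2.0=a2, OF mono]
      concave_envelope_QQ[where ?a1.0=a1 and ?a2.0=a2, OF mono]
    unfolding f_def lower_facet_def upper_facet_def by blast
qed

end
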